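(* Let $\theta\in(0,\pi)$ and let $\mathcal{B}_\theta$ be the moduli space of spherical bigons of angle $\theta$ with labeled sides, parametrized by $(K_1,K_2)\in\mathbb{R}^2$, where $K_i=\log\cot r_i$ and $r_i$ is the radius of the disk $D_i\subset\mathbb{S}^2$ whose boundary contains side $i$. Let $T_i$ be the total geodesic curvature of side $i$ (its length times $\cot r_i$). Then the matrix-valued function $$\begin{pmatrix}\frac{\partial T_1}{\partial K_1}&\frac{\partial T_1}{\partial K_2}\\[3pt]\frac{\partial T_2}{\partial K_1}&\frac{\partial T_2}{\partial K_2}\end{pmatrix}$$ on $\mathcal{B}_\theta$ is symmetric and positive definite at every point.
   Context: A spherical bigon is the intersection $D_1\cap D_2$ of two open round disks in $\mathbb{S}^2$ of radii less than $\frac{\pi}{2}$, neither containing the other, with angle the interior angle at its corners; $\mathcal{B}_\theta$ consists of such bigons of angle $\theta$ with the two sides labeled $1,2$, up to label-preserving isometry. The map $(r_1,r_2)$ is a bijection $\mathcal{B}_\theta\to(0,\frac{\pi}{2})^2$, so $(K_1,K_2)$ parametrizes $\mathcal{B}_\theta$ by $\mathbb{R}^2$. *)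

theory Defs
  imports "HOL-Analysis.Analysis"
begin

definition sph_angle :: "real^3 \<Rightarrow> real^3 \<Rightarrow> real^3 \<Rightarrow> real" where
  "sph_angle a b c =
     (let u = b - (a \<bullet> b) *\<^sub>R a; v = c - (a \<bullet> c) *\<^sub>R a
      in arccos ((u \<bullet> v) / (norm u * norm v)))"

text \<open>Corner p of the bigon, and the centers of the disks D1, D2 of radii r1, r2 whose
  boundaries pass through p. The inward unit normals at p are (0,1,0) and
  (0,cos(pi-theta),sin(pi-theta)); the interior angle of D1 \<inter> D2 at p is theta.\<close>
definition bigon_corner :: "real^3" where
  "bigon_corner = vector [1, 0, 0]"

definition bigon_center1 :: "real \<Rightarrow> real^3" where
  "bigon_center1 r1 = vector [cos r1, sin r1, 0]"

definition bigon_center2 :: "real \<Rightarrow> real \<Rightarrow> real^3" where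
  "bigon_center2 \<theta> r2 = vector [cos r2, sin r2 * cos (pi - \<theta>), sin r2 * sin (pi - \<theta>)]"

text \<open>Length of side i (an arc of the circle of spherical radius r_i about c_i,
  going from corner p to the mirror corner, through the direction of c_j):
  rotation angle 2 * (angle at c_i between p and c_j), times sin r_i.\<close>
definition side_length1 :: "real \<Rightarrow> real \<Rightarrow> real \<Rightarrow> real" where
  "side_length1 \<theta> r1 r2 =
     2 * sph_angle (bigon_center1 r1) bigon_corner (bigon_center2 \<theta> r2) * sin r1"

definition side_length2 :: "real \<Rightarrow> real \<Rightarrow> real \<Rightarrow> real" where
  "side_length2 \<theta> r1 r2 =
     2 * sph_angle (bigon_center2 \<theta> r2) bigon_corner (bigon_center1 r1) * sin r2"

text \<open>Radius from the coordinate K = log cot r, i.e. cot r = exp K, r in (0, pi/2).\<close>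
definition radius_of :: "real \<Rightarrow> real" where
  "radius_of K = arctan (exp (- K))"

definition total_curv1 :: "real \<Rightarrow> real \<Rightarrow> real \<Rightarrow> real" where
  "total_curv1 \<theta> K1 K2 = side_length1 \<theta> (radius_of K1) (radius_of K2) * cot (radius_of K1)"

definition total_curv2 :: "real \<Rightarrow> real \<Rightarrow> real \<Rightarrow> real" where
  "total_curv2 \<theta> K1 K2 = side_length2 \<theta> (radius_of K1) (radius_of K2) * cot (radius_of K2)"

end

theory Submission
  imports Defs
begin

(* In the variables x = cot r_1 = exp K_1, y = cot r_2 = exp K_2, s = sin theta and c = cos theta,
   the centre of D_1 sees half of side 1 under the angle alpha = pi/2 - arctan u, where
   u = (y + x c) / (s sqrt (1 + x^2)); hence T_1 = 2 alpha cos r_1, and T_2 is the same expression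
   with x and y exchanged. In the log coordinates K_i both mixed partials equal -B, where
   B = 2 x y s / (s^2 + x^2 + y^2 + 2 x y c) > 0, while dT_1/dK_1 exceeds B by
   2 x (alpha - sin alpha cos alpha) / (1 + x^2)^(3/2) > 0, and symmetrically for T_2.
   A symmetric matrix whose diagonal entries exceed the modulus of its off-diagonal entry is
   positive definite. *)

lemma inner_vector_3:
  "vector [a1, a2, a3] \<bullet> (vector [b1, b2, b3] :: real^3) = a1 * b1 + a2 * b2 + a3 * b3"
  by (simp add: inner_vec_def sum_3)

lemma sph_angle_unit_eq_arccos:
  assumes "a \<bullet> a = 1" "b \<bullet> b = 1" "c \<bullet> c = 1"
  shows "sph_angle a b c = arccos ((b \<bullet> c - (a \<bullet> b) * (a \<bullet> c)) /
            (sqrt (1 - (a \<bullet> b)\<^sup>2) * sqrt (1 - (a \<bullet> c)\<^sup>2)))"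
proof -
  have "(b - (a \<bullet> b) *\<^sub>R a) \<bullet> (b - (a \<bullet> b) *\<^sub>R a) = 1 - (a \<bullet> b)\<^sup>2"
    and "(c - (a \<bullet> c) *\<^sub>R a) \<bullet> (c - (a \<bullet> c) *\<^sub>R a) = 1 - (a \<bullet> c)\<^sup>2"
    and "(b - (a \<bullet> b) *\<^sub>R a) \<bullet> (c - (a \<bullet> c) *\<^sub>R a) = b \<bullet> c - (a \<bullet> b) * (a \<bullet> c)"
    using assms by (simp_all add: inner_diff_left inner_diff_right inner_commute power2_eq_square)
  then show ?thesis
    unfolding sph_angle_def Let_def norm_eq_sqrt_inner by simp
qed

lemma arccos_div_sqrt_add_square:
  fixes N M :: real
  assumes "M > 0"
  shows "arccos (N / sqrt (N\<^sup>2 + M\<^sup>2)) = pi / 2 - arctan (N / M)"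
proof -
  define R where "R = sqrt (N\<^sup>2 + M\<^sup>2)"
  have R: "R > 0" "R\<^sup>2 = N\<^sup>2 + M\<^sup>2"
    using assms by (auto simp: R_def add_nonneg_pos)
  have "1 - (N / R)\<^sup>2 = (R\<^sup>2 - N\<^sup>2) / R\<^sup>2"
    using R(1) by (simp add: power_divide field_simps)
  also have "\<dots> = (M / R)\<^sup>2"
    using R(2) by (simp add: power_divide)
  finally have complement: "1 - (N / R)\<^sup>2 = (M / R)\<^sup>2" .
  have "(M / R)\<^sup>2 > 0"
    using R assms by simp
  then have "(N / R)\<^sup>2 < 1"
    using complement by linarith
  then have "\<bar>N / R\<bar> < 1"
    by (simp add: abs_square_less_1)
  then have "arccos (N / R) = pi / 2 - arctan (N / R / sqrt (1 - (N / R)\<^sup>2))"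
    by (intro arccos_arctan) (auto simp only: abs_less_iff)
  also have "N / R / sqrt (1 - (N / R)\<^sup>2) = N / M"
    using complement R(1) assms by simp
  finally show ?thesis
    by (simp add: R_def)
qed

lemma sqrt_one_minus_square_div_sqrt_one_add_square:
  fixes x :: real
  shows "sqrt (1 - (x / sqrt (1 + x\<^sup>2))\<^sup>2) = 1 / sqrt (1 + x\<^sup>2)"
proof -
  have "0 < 1 + x\<^sup>2"
    by (simp add: add_pos_nonneg)
  then have "1 - (x / sqrt (1 + x\<^sup>2))\<^sup>2 = (1 / sqrt (1 + x\<^sup>2))\<^sup>2"
    by (simp add: power_divide field_simps)
  then show ?thesis
    by simp
qed

lemma sph_angle_eq_pi_half_minus_arctan:
  fixes a b d :: "real^3" and s c x y :: real
  assumes unit: "a \<bullet> a = 1" "b \<bullet> b = 1" "d \<bullet> d = 1"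
    and ab: "a \<bullet> b = x / sqrt (1 + x\<^sup>2)" and bd: "b \<bullet> d = y / sqrt (1 + y\<^sup>2)"
    and ad: "a \<bullet> d = (x * y - c) / (sqrt (1 + x\<^sup>2) * sqrt (1 + y\<^sup>2))"
    and s: "s > 0" and sc: "s\<^sup>2 + c\<^sup>2 = 1"
  shows "sph_angle a b d = pi / 2 - arctan ((y + x * c) / (s * sqrt (1 + x\<^sup>2)))"
proof -
  define X where "X = sqrt (1 + x\<^sup>2)"
  define Y where "Y = sqrt (1 + y\<^sup>2)"
  define Q where "Q = (y + x * c)\<^sup>2 + (s * X)\<^sup>2"
  have X: "X > 0" "X\<^sup>2 = 1 + x\<^sup>2"
    unfolding X_def by (simp_all add: add_pos_nonneg)
  have Y: "Y > 0" "Y\<^sup>2 = 1 + y\<^sup>2"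
    unfolding Y_def by (simp_all add: add_pos_nonneg)
  have "Q > 0"
    unfolding Q_def using s X(1) by (simp add: add_nonneg_pos)
  have ab_compl: "sqrt (1 - (a \<bullet> b)\<^sup>2) = 1 / X"
    unfolding ab X_def by (rule sqrt_one_minus_square_div_sqrt_one_add_square)
  have ad_compl: "sqrt (1 - (a \<bullet> d)\<^sup>2) = sqrt Q / (X * Y)"
  proof -
    have "1 - (a \<bullet> d)\<^sup>2 = ((X * Y)\<^sup>2 - (x * y - c)\<^sup>2) / (X * Y)\<^sup>2"
      unfolding ad X_def[symmetric] Y_def[symmetric] using X(1) Y(1)
      by (simp add: field_simps)
    also have "(X * Y)\<^sup>2 - (x * y - c)\<^sup>2 = Q"
      unfolding Q_def power_mult_distrib X(2) Y(2) using sc by algebra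
    finally show ?thesis
      using X(1) Y(1) \<open>Q > 0\<close> by (simp add: real_sqrt_divide real_sqrt_mult)
  qed
  have numerator: "b \<bullet> d - (a \<bullet> b) * (a \<bullet> d) = (y + x * c) / (X\<^sup>2 * Y)"
  proof -
    have "y * X\<^sup>2 - x * (x * y - c) = y + x * c"
      using X(2) by (simp add: algebra_simps power2_eq_square)
    then show ?thesis
      unfolding ab bd ad X_def[symmetric] Y_def[symmetric] using X(1) Y(1)
      by (simp add: field_simps power2_eq_square)
  qed
  have cosine: "(y + x * c) / (X\<^sup>2 * Y) / (1 / X * (sqrt Q / (X * Y)))
      = (y + x * c) / sqrt Q"
    using X(1) Y(1) \<open>Q > 0\<close> by (simp add: field_simps power2_eq_square)
  have "sph_angle a b d = arccos ((y + x * c) / sqrt Q)"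
    unfolding sph_angle_unit_eq_arccos[OF unit] ab_compl ad_compl numerator cosine ..
  also have "\<dots> = pi / 2 - arctan ((y + x * c) / (s * X))"
    unfolding Q_def using s X(1) by (intro arccos_div_sqrt_add_square) simp
  finally show ?thesis
    by (simp add: X_def)
qed

lemma sin_cos_radius_of:
  fixes K :: real
  shows "sin (radius_of K) = 1 / sqrt (1 + (exp K)\<^sup>2)"
    and "cos (radius_of K) = exp K / sqrt (1 + (exp K)\<^sup>2)"
proof -
  define x where "x = exp K"
  have "x > 0"
    by (simp add: x_def)
  have inv: "exp (- K) = 1 / x"
    by (simp add: x_def exp_minus divide_inverse)
  have root: "sqrt (1 + (1 / x)\<^sup>2) = sqrt (1 + x\<^sup>2) / x"
  proof -
    have "1 + (1 / x)\<^sup>2 = (1 + x\<^sup>2) / x\<^sup>2"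
      using \<open>x > 0\<close> by (simp add: field_simps)
    then show ?thesis
      using \<open>x > 0\<close> by (simp add: real_sqrt_divide)
  qed
  show "sin (radius_of K) = 1 / sqrt (1 + (exp K)\<^sup>2)"
    and "cos (radius_of K) = exp K / sqrt (1 + (exp K)\<^sup>2)"
    unfolding radius_of_def sin_arctan cos_arctan inv root x_def[symmetric]
    using \<open>x > 0\<close> by (simp_all add: field_simps)
qed

lemma cot_radius_of: "cot (radius_of K) = exp K"
proof -
  have "sqrt (1 + (exp K)\<^sup>2) > 0"
    by (simp add: add_pos_nonneg)
  then show ?thesis
    by (simp add: cot_def sin_cos_radius_of)
qed

definition bigon_curv :: "real \<Rightarrow> real \<Rightarrow> real \<Rightarrow> real \<Rightarrow> real" where
  "bigon_curv s c x y =
     2 * (pi / 2 - arctan ((y + x * c) / (s * sqrt (1 + x\<^sup>2)))) * (x / sqrt (1 + x\<^sup>2))"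

lemma bigon_points_unit:
  "bigon_corner \<bullet> bigon_corner = 1"
  "bigon_center1 r \<bullet> bigon_center1 r = 1"
  "bigon_center2 \<theta> r \<bullet> bigon_center2 \<theta> r = 1"
proof -
  have "(sin r * cos \<alpha>)\<^sup>2 + (sin r * sin \<alpha>)\<^sup>2 = (sin r)\<^sup>2" for \<alpha>
    by (simp add: power_mult_distrib flip: distrib_left)
  then show "bigon_corner \<bullet> bigon_corner = 1"
    "bigon_center1 r \<bullet> bigon_center1 r = 1"
    "bigon_center2 \<theta> r \<bullet> bigon_center2 \<theta> r = 1"
    by (simp_all add: bigon_corner_def bigon_center1_def bigon_center2_def inner_vector_3
        add.assoc flip: power2_eq_square)
qed

lemma sph_angle_bigon_centers:
  fixes \<theta> K1 K2 :: real
  assumes "0 < \<theta>" "\<theta> < pi"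
  defines "c1 \<equiv> bigon_center1 (radius_of K1)" and "c2 \<equiv> bigon_center2 \<theta> (radius_of K2)"
  shows "sph_angle c1 bigon_corner c2
           = pi / 2 - arctan ((exp K2 + exp K1 * cos \<theta>) / (sin \<theta> * sqrt (1 + (exp K1)\<^sup>2)))"
    and "sph_angle c2 bigon_corner c1
           = pi / 2 - arctan ((exp K1 + exp K2 * cos \<theta>) / (sin \<theta> * sqrt (1 + (exp K2)\<^sup>2)))"
proof -
  define x y s c where "x = exp K1" and "y = exp K2" and "s = sin \<theta>" and "c = cos \<theta>"
  define X Y where "X = sqrt (1 + x\<^sup>2)" and "Y = sqrt (1 + y\<^sup>2)"
  define p where "p = bigon_corner"
  have "s > 0" "s\<^sup>2 + c\<^sup>2 = 1"
    using assms by (simp_all add: s_def c_def sin_gt_zero)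
  have "X > 0" "Y > 0"
    by (simp_all add: X_def Y_def add_pos_nonneg)
  have p: "p = vector [1, 0, 0]"
    by (simp add: p_def bigon_corner_def)
  have c1: "c1 = vector [x / X, 1 / X, 0]"
    by (simp add: c1_def bigon_center1_def sin_cos_radius_of x_def X_def)
  have c2: "c2 = vector [y / Y, - c / Y, s / Y]"
    by (simp add: c2_def bigon_center2_def sin_cos_radius_of y_def Y_def s_def c_def)
  have unit: "c1 \<bullet> c1 = 1" "p \<bullet> p = 1" "c2 \<bullet> c2 = 1"
    by (simp_all add: c1_def c2_def p_def bigon_points_unit)
  have "c1 \<bullet> p = x / X" "p \<bullet> c2 = y / Y" "c1 \<bullet> c2 = (x * y - c) / (X * Y)"
    and "c2 \<bullet> p = y / Y" "p \<bullet> c1 = x / X" "c2 \<bullet> c1 = (y * x - c) / (Y * X)"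
    using \<open>X > 0\<close> \<open>Y > 0\<close> by (simp_all add: c1 c2 p inner_vector_3 field_simps)
  note inner = this[unfolded X_def Y_def]
  have "sph_angle c1 p c2 = pi / 2 - arctan ((y + x * c) / (s * X))"
    using sph_angle_eq_pi_half_minus_arctan[OF unit inner(1-3) \<open>s > 0\<close> \<open>s\<^sup>2 + c\<^sup>2 = 1\<close>]
    by (simp add: X_def)
  moreover have "sph_angle c2 p c1 = pi / 2 - arctan ((x + y * c) / (s * Y))"
    using sph_angle_eq_pi_half_minus_arctan[OF unit(3,2,1) inner(4-6) \<open>s > 0\<close> \<open>s\<^sup>2 + c\<^sup>2 = 1\<close>]
    by (simp add: Y_def)
  ultimately show "sph_angle c1 bigon_corner c2
           = pi / 2 - arctan ((exp K2 + exp K1 * cos \<theta>) / (sin \<theta> * sqrt (1 + (exp K1)\<^sup>2)))"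
    and "sph_angle c2 bigon_corner c1
           = pi / 2 - arctan ((exp K1 + exp K2 * cos \<theta>) / (sin \<theta> * sqrt (1 + (exp K2)\<^sup>2)))"
    by (simp_all add: p_def x_def y_def s_def c_def X_def Y_def)
qed

lemma total_curv_eq_bigon_curv:
  fixes \<theta> K1 K2 :: real
  assumes "0 < \<theta>" "\<theta> < pi"
  shows "total_curv1 \<theta> K1 K2 = bigon_curv (sin \<theta>) (cos \<theta>) (exp K1) (exp K2)"
    and "total_curv2 \<theta> K1 K2 = bigon_curv (sin \<theta>) (cos \<theta>) (exp K2) (exp K1)"
  using sph_angle_bigon_centers[OF assms]
  by (simp_all add: total_curv1_def total_curv2_def side_length1_def side_length2_def
      bigon_curv_def cot_radius_of sin_cos_radius_of)

lemma sin_cos_quadratic_pos: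
  fixes s c x y :: real
  assumes "s > 0" "s\<^sup>2 + c\<^sup>2 = 1"
  shows "s\<^sup>2 + x\<^sup>2 + y\<^sup>2 + 2 * x * y * c > 0"
proof -
  have "s\<^sup>2 + x\<^sup>2 + y\<^sup>2 + 2 * x * y * c = s\<^sup>2 * (1 + x\<^sup>2) + (y + x * c)\<^sup>2"
    using assms(2) by algebra
  then show ?thesis
    using assms(1) by (simp add: add_pos_nonneg)
qed

lemma one_add_square_affine_div_sqrt:
  fixes s c x y :: real
  assumes "s > 0" "s\<^sup>2 + c\<^sup>2 = 1"
  shows "1 + ((y + x * c) / (s * sqrt (1 + x\<^sup>2)))\<^sup>2
           = (s\<^sup>2 + x\<^sup>2 + y\<^sup>2 + 2 * x * y * c) / (s * sqrt (1 + x\<^sup>2))\<^sup>2"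
proof -
  have "0 < 1 + x\<^sup>2"
    by (simp add: add_pos_nonneg)
  then have square: "(s * sqrt (1 + x\<^sup>2))\<^sup>2 = s\<^sup>2 * (1 + x\<^sup>2)" "s * sqrt (1 + x\<^sup>2) \<noteq> 0"
    using assms(1) by (simp_all add: power_mult_distrib)
  have "\<And>N D :: real. D \<noteq> 0 \<Longrightarrow> 1 + (N / D)\<^sup>2 = (D\<^sup>2 + N\<^sup>2) / D\<^sup>2"
    by (simp add: field_simps power_divide)
  from this[OF square(2)]
  have "1 + ((y + x * c) / (s * sqrt (1 + x\<^sup>2)))\<^sup>2
      = (s\<^sup>2 * (1 + x\<^sup>2) + (y + x * c)\<^sup>2) / (s * sqrt (1 + x\<^sup>2))\<^sup>2"
    unfolding square(1) .
  also have "s\<^sup>2 * (1 + x\<^sup>2) + (y + x * c)\<^sup>2 = s\<^sup>2 + x\<^sup>2 + y\<^sup>2 + 2 * x * y * c"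
    using assms(2) by algebra
  finally show ?thesis .
qed

lemma has_real_derivative_sqrt_one_add_square:
  fixes x :: real
  shows "((\<lambda>x. sqrt (1 + x\<^sup>2)) has_real_derivative x / sqrt (1 + x\<^sup>2)) (at x)"
proof -
  have "0 < 1 + x\<^sup>2"
    by (simp add: add_pos_nonneg)
  moreover have "((\<lambda>x. 1 + x\<^sup>2) has_real_derivative 2 * x) (at x)"
    by (auto intro!: derivative_eq_intros)
  ultimately show ?thesis
    by (rule DERIV_cong[OF DERIV_chain2[OF DERIV_real_sqrt]]) (simp add: field_simps)
qed

lemma has_real_derivative_div_sqrt_one_add_square:
  fixes x :: real
  shows "((\<lambda>x. x / sqrt (1 + x\<^sup>2)) has_real_derivative 1 / sqrt (1 + x\<^sup>2) ^ 3) (at x)"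
proof -
  define X where "X = sqrt (1 + x\<^sup>2)"
  have X: "X > 0" "X\<^sup>2 = 1 + x\<^sup>2"
    unfolding X_def by (simp_all add: add_pos_nonneg)
  have "((\<lambda>x. x / sqrt (1 + x\<^sup>2)) has_real_derivative (1 * X - x * (x / X)) / X\<^sup>2) (at x)"
    using DERIV_divide[OF DERIV_ident has_real_derivative_sqrt_one_add_square] X
    by (simp add: X_def power2_eq_square)
  also have "(1 * X - x * (x / X)) / X\<^sup>2 = (X\<^sup>2 - x\<^sup>2) / X ^ 3"
    using X(1) by (simp add: field_simps power2_eq_square power3_eq_cube)
  finally show ?thesis
    using X by (simp add: X_def)
qed

lemma has_real_derivative_affine_div_sqrt_one_add_square:
  fixes s c x y :: real
  assumes "s > 0"
  shows "((\<lambda>x. (y + x * c) / (s * sqrt (1 + x\<^sup>2))) has_real_derivative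
            (c - x * y) / (s * sqrt (1 + x\<^sup>2) ^ 3)) (at x)"
proof -
  define X where "X = sqrt (1 + x\<^sup>2)"
  have X: "X > 0" "X\<^sup>2 = 1 + x\<^sup>2"
    unfolding X_def by (simp_all add: add_pos_nonneg)
  have "((\<lambda>x. y + x * c) has_real_derivative c) (at x)"
    by (auto intro!: derivative_eq_intros)
  moreover have "((\<lambda>x. s * sqrt (1 + x\<^sup>2)) has_real_derivative s * (x / X)) (at x)"
    unfolding X_def by (rule DERIV_cmult[OF has_real_derivative_sqrt_one_add_square])
  ultimately have "((\<lambda>x. (y + x * c) / (s * sqrt (1 + x\<^sup>2))) has_real_derivative
            (c * (s * X) - (y + x * c) * (s * (x / X))) / (s * X * (s * X))) (at x)"
    using X(1) assms by (auto dest: DERIV_divide simp: X_def[symmetric])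
  also have "(c * (s * X) - (y + x * c) * (s * (x / X))) / (s * X * (s * X))
      = (c * X\<^sup>2 - (y + x * c) * x) / (s * X ^ 3)"
    using X(1) assms by (simp add: field_simps power2_eq_square power3_eq_cube)
  also have "c * X\<^sup>2 - (y + x * c) * x = c - x * y"
    using X(2) by (simp add: algebra_simps power2_eq_square)
  finally show ?thesis
    by (simp add: X_def)
qed

lemma has_real_derivative_arctan_affine_div_sqrt_one_add_square:
  fixes s c x y :: real
  assumes "s > 0" "s\<^sup>2 + c\<^sup>2 = 1"
  shows "((\<lambda>x. arctan ((y + x * c) / (s * sqrt (1 + x\<^sup>2)))) has_real_derivative
           s * (c - x * y) / (sqrt (1 + x\<^sup>2) * (s\<^sup>2 + x\<^sup>2 + y\<^sup>2 + 2 * x * y * c))) (at x)"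
proof -
  define X Q where "X = sqrt (1 + x\<^sup>2)" and "Q = s\<^sup>2 + x\<^sup>2 + y\<^sup>2 + 2 * x * y * c"
  have "X > 0" "Q > 0"
    using sin_cos_quadratic_pos[OF assms] by (simp_all add: X_def Q_def add_pos_nonneg)
  have "inverse (1 + ((y + x * c) / (s * X))\<^sup>2) * ((c - x * y) / (s * X ^ 3)) = s * (c - x * y) / (X * Q)"
    unfolding one_add_square_affine_div_sqrt[OF assms, where x = x and y = y, folded X_def Q_def]
    using assms(1) \<open>X > 0\<close> \<open>Q > 0\<close> by (simp add: field_simps power2_eq_square power3_eq_cube)
  then show ?thesis
    unfolding X_def Q_def
    by (rule DERIV_cong[OF DERIV_chain2[OF DERIV_arctan
          has_real_derivative_affine_div_sqrt_one_add_square[OF assms(1)]]])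
qed

lemma has_real_derivative_bigon_curv_fst:
  fixes s c x y :: real
  assumes s: "s > 0" and sc: "s\<^sup>2 + c\<^sup>2 = 1"
  shows "((\<lambda>x. bigon_curv s c x y) has_real_derivative
           2 * (pi / 2 - arctan ((y + x * c) / (s * sqrt (1 + x\<^sup>2)))) / sqrt (1 + x\<^sup>2) ^ 3
           - 2 * s * x * (c - x * y) / ((1 + x\<^sup>2) * (s\<^sup>2 + x\<^sup>2 + y\<^sup>2 + 2 * x * y * c))) (at x)"
proof -
  define X where "X = sqrt (1 + x\<^sup>2)"
  define Q where "Q = s\<^sup>2 + x\<^sup>2 + y\<^sup>2 + 2 * x * y * c"
  have "X > 0" "X * X = 1 + x\<^sup>2" "Q > 0"
    using sin_cos_quadratic_pos[OF s sc]
    by (simp_all add: X_def Q_def add_pos_nonneg flip: power2_eq_square)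
  have "((\<lambda>x. 2 * (pi / 2 - arctan ((y + x * c) / (s * sqrt (1 + x\<^sup>2))))) has_real_derivative
          2 * (0 - s * (c - x * y) / (X * Q))) (at x)"
    unfolding X_def Q_def
    by (intro DERIV_cmult DERIV_diff DERIV_const has_real_derivative_arctan_affine_div_sqrt_one_add_square s sc)
  from DERIV_mult[OF this has_real_derivative_div_sqrt_one_add_square]
  have "((\<lambda>x. bigon_curv s c x y) has_real_derivative
      2 * (0 - s * (c - x * y) / (X * Q)) * (x / X)
      + 1 / X ^ 3 * (2 * (pi / 2 - arctan ((y + x * c) / (s * X))))) (at x)"
    by (simp add: bigon_curv_def X_def)
  moreover have "2 * (0 - s * (c - x * y) / (X * Q)) * (x / X) = - 2 * s * x * (c - x * y) / ((X * X) * Q)"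
    using \<open>X > 0\<close> \<open>Q > 0\<close> by (simp add: field_simps)
  ultimately show ?thesis
    unfolding \<open>X * X = 1 + x\<^sup>2\<close> by (simp add: X_def Q_def)
qed

lemma has_real_derivative_bigon_curv_snd:
  fixes s c x y :: real
  assumes s: "s > 0" and sc: "s\<^sup>2 + c\<^sup>2 = 1"
  shows "((\<lambda>y. bigon_curv s c x y) has_real_derivative
           - 2 * x * s / (s\<^sup>2 + x\<^sup>2 + y\<^sup>2 + 2 * x * y * c)) (at y)"
proof -
  define X Q where "X = sqrt (1 + x\<^sup>2)" and "Q = s\<^sup>2 + x\<^sup>2 + y\<^sup>2 + 2 * x * y * c"
  have "X > 0" "Q > 0"
    using sin_cos_quadratic_pos[OF s sc] by (simp_all add: X_def Q_def add_pos_nonneg)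
  have "((\<lambda>y. (y + x * c) / (s * X)) has_real_derivative 1 / (s * X)) (at y)"
    using s \<open>X > 0\<close> by (auto intro!: derivative_eq_intros)
  moreover have "inverse (1 + ((y + x * c) / (s * X))\<^sup>2) * (1 / (s * X)) = s * X / Q"
    unfolding one_add_square_affine_div_sqrt[OF s sc, where x = x and y = y, folded X_def Q_def]
    using s \<open>X > 0\<close> \<open>Q > 0\<close> by (simp add: field_simps power2_eq_square)
  ultimately have "((\<lambda>y. arctan ((y + x * c) / (s * X))) has_real_derivative s * X / Q) (at y)"
    by (metis DERIV_chain2 DERIV_arctan)
  then have "((\<lambda>y. 2 * (pi / 2 - arctan ((y + x * c) / (s * X))) * (x / X)) has_real_derivative
          2 * (0 - s * X / Q) * (x / X)) (at y)"
    by (intro DERIV_cmult DERIV_cmult_right DERIV_diff DERIV_const)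
  moreover have "2 * (0 - s * X / Q) * (x / X) = - 2 * x * s / Q"
    using \<open>X > 0\<close> by simp
  ultimately show ?thesis
    by (simp add: bigon_curv_def X_def Q_def)
qed

lemma arctan_add_div_less_pi_half:
  fixes u :: real
  shows "arctan u + u / (1 + u\<^sup>2) < pi / 2"
proof (cases "u > 0")
  case False
  then have "u / (1 + u\<^sup>2) \<le> 0"
    by (simp add: divide_nonpos_pos add_pos_nonneg)
  with arctan_ubound[of u] show ?thesis by linarith
next
  case True
  define v where "v = pi / 2 - arctan u"
  have "v > 0"
    using arctan_ubound[of u] by (simp add: v_def)
  have "u / (1 + u\<^sup>2) = sin v * cos v"
    by (simp add: v_def sin_diff cos_diff sin_arctan cos_arctan power2_eq_square)
  also have "\<dots> < sin v"
  proof -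
    have "v < pi / 2"
      using True by (simp add: v_def)
    then have "sin v > 0" "cos v < 1"
      using \<open>v > 0\<close> cos_monotone_0_pi[of 0 v] by (auto intro: sin_gt_zero)
    then show ?thesis by simp
  qed
  also have "\<dots> \<le> v"
    using sin_x_le_x \<open>v > 0\<close> by simp
  finally show ?thesis
    unfolding v_def by linarith
qed

definition bigon_coupling :: "real \<Rightarrow> real \<Rightarrow> real \<Rightarrow> real \<Rightarrow> real" where
  "bigon_coupling s c x y = 2 * x * y * s / (s\<^sup>2 + x\<^sup>2 + y\<^sup>2 + 2 * x * y * c)"

definition bigon_excess :: "real \<Rightarrow> real \<Rightarrow> real \<Rightarrow> real \<Rightarrow> real" where
  "bigon_excess s c x y =
     (let u = (y + x * c) / (s * sqrt (1 + x\<^sup>2))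
      in 2 * x * (pi / 2 - arctan u - u / (1 + u\<^sup>2)) / sqrt (1 + x\<^sup>2) ^ 3)"

lemma bigon_coupling_commute: "bigon_coupling s c x y = bigon_coupling s c y x"
  by (simp add: bigon_coupling_def algebra_simps)

lemma bigon_coupling_pos:
  fixes s c x y :: real
  assumes "s > 0" "s\<^sup>2 + c\<^sup>2 = 1" "x > 0" "y > 0"
  shows "bigon_coupling s c x y > 0"
  using assms sin_cos_quadratic_pos[OF assms(1,2), of x y] by (simp add: bigon_coupling_def)

lemma bigon_excess_pos:
  fixes s c x y :: real
  assumes "x > 0"
  shows "bigon_excess s c x y > 0"
proof -
  define u where "u = (y + x * c) / (s * sqrt (1 + x\<^sup>2))"
  have "pi / 2 - arctan u - u / (1 + u\<^sup>2) > 0"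
    using arctan_add_div_less_pi_half[of u] by linarith
  then show ?thesis
    unfolding bigon_excess_def Let_def u_def[symmetric] using assms by (simp add: add_pos_nonneg)
qed

lemma has_real_derivative_bigon_curv_log_fst:
  fixes s c y K :: real
  assumes s: "s > 0" and sc: "s\<^sup>2 + c\<^sup>2 = 1"
  shows "((\<lambda>k. bigon_curv s c (exp k) y) has_real_derivative
           bigon_excess s c (exp K) y + bigon_coupling s c (exp K) y) (at K)"
proof -
  define x X Q u where "x = exp K" and "X = sqrt (1 + x\<^sup>2)"
    and "Q = s\<^sup>2 + x\<^sup>2 + y\<^sup>2 + 2 * x * y * c" and "u = (y + x * c) / (s * X)"
  have "X > 0" "X ^ 3 = X * (1 + x\<^sup>2)"
    by (simp_all add: X_def add_pos_nonneg power3_eq_cube flip: power2_eq_square)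
  have "Q > 0"
    unfolding Q_def using s sc by (rule sin_cos_quadratic_pos)
  have "1 + u\<^sup>2 = Q / (s * X)\<^sup>2"
    unfolding u_def by (rule one_add_square_affine_div_sqrt[OF s sc, where x = x and y = y, folded X_def Q_def])
  then have u_frac: "u / (1 + u\<^sup>2) = s * X * (y + x * c) / Q"
    unfolding u_def using s \<open>X > 0\<close> \<open>Q > 0\<close> by (simp add: field_simps power2_eq_square)
  define P where "P = 1 + x\<^sup>2"
  have "P > 0" "X ^ 3 = X * P"
    using \<open>X ^ 3 = X * (1 + x\<^sup>2)\<close> by (simp_all add: P_def add_pos_nonneg)
  have "(2 * (pi / 2 - arctan u) / X ^ 3 - 2 * s * x * (c - x * y) / (P * Q)) * x
      = bigon_excess s c x y + bigon_coupling s c x y"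
    unfolding bigon_excess_def bigon_coupling_def Let_def X_def[symmetric] u_def[symmetric]
      Q_def[symmetric] u_frac \<open>X ^ 3 = X * P\<close>
    using s \<open>X > 0\<close> \<open>Q > 0\<close> \<open>P > 0\<close> by (simp add: field_simps) (unfold P_def, algebra)
  then show ?thesis
    unfolding x_def X_def Q_def u_def P_def
    by (rule DERIV_cong[OF DERIV_chain2[OF has_real_derivative_bigon_curv_fst[OF s sc] DERIV_exp]])
qed

lemma has_real_derivative_bigon_curv_log_snd:
  fixes s c x L :: real
  assumes "s > 0" "s\<^sup>2 + c\<^sup>2 = 1"
  shows "((\<lambda>l. bigon_curv s c x (exp l)) has_real_derivative - bigon_coupling s c x (exp L)) (at L)"
  by (rule DERIV_cong[OF DERIV_chain2[OF has_real_derivative_bigon_curv_snd[OF assms] DERIV_exp]])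
    (simp add: bigon_coupling_def)

lemma quadratic_form_pos_if_diagonally_dominant:
  fixes a b d u v :: real
  assumes "\<bar>b\<bar> < a" "\<bar>b\<bar> < d" "(u, v) \<noteq> (0, 0)"
  shows "u * (a * u + b * v) + v * (b * u + d * v) > 0"
proof -
  have "0 \<le> \<bar>b\<bar> * (\<bar>u\<bar> - \<bar>v\<bar>)\<^sup>2"
    by simp
  moreover have "0 < (a - \<bar>b\<bar>) * u\<^sup>2 + (d - \<bar>b\<bar>) * v\<^sup>2"
    using assms by (auto intro: add_pos_nonneg add_nonneg_pos)
  moreover have "- (2 * \<bar>b\<bar> * \<bar>u\<bar> * \<bar>v\<bar>) \<le> 2 * b * u * v"
    by (auto simp: abs_mult[symmetric] abs_le_iff)
  ultimately show ?thesis
    by (simp add: algebra_simps power2_eq_square)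
qed

theorem lemma3p3:
  fixes \<theta> K1 K2 :: real
  assumes "0 < \<theta>" and "\<theta> < pi"
  shows "\<exists>a b c d.
     ((\<lambda>k. total_curv1 \<theta> k K2) has_real_derivative a) (at K1) \<and>
     ((\<lambda>k. total_curv1 \<theta> K1 k) has_real_derivative b) (at K2) \<and>
     ((\<lambda>k. total_curv2 \<theta> k K2) has_real_derivative c) (at K1) \<and>
     ((\<lambda>k. total_curv2 \<theta> K1 k) has_real_derivative d) (at K2) \<and>
     b = c \<and>
     (\<forall>x y :: real. (x, y) \<noteq> (0, 0) \<longrightarrow> x * (a * x + b * y) + y * (c * x + d * y) > 0)"
proof -
  define s c where "s = sin \<theta>" and "c = cos \<theta>"
  define B where "B = bigon_coupling s c (exp K1) (exp K2)"
  have "s > 0" "s\<^sup>2 + c\<^sup>2 = 1"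
    using assms by (simp_all add: s_def c_def sin_gt_zero)
  note curv = total_curv_eq_bigon_curv[OF assms, folded s_def c_def]
    and log_fst = has_real_derivative_bigon_curv_log_fst[OF \<open>s > 0\<close> \<open>s\<^sup>2 + c\<^sup>2 = 1\<close>]
    and log_snd = has_real_derivative_bigon_curv_log_snd[OF \<open>s > 0\<close> \<open>s\<^sup>2 + c\<^sup>2 = 1\<close>]
  have "B > 0"
    unfolding B_def using \<open>s > 0\<close> \<open>s\<^sup>2 + c\<^sup>2 = 1\<close> by (simp add: bigon_coupling_pos)
  define E1 E2 where "E1 = bigon_excess s c (exp K1) (exp K2)" and "E2 = bigon_excess s c (exp K2) (exp K1)"
  have "\<bar>- B\<bar> < E1 + B" "\<bar>- B\<bar> < E2 + B"
    using \<open>B > 0\<close> bigon_excess_pos[of "exp K1"] bigon_excess_pos[of "exp K2"] by (auto simp: E1_def E2_def)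
  note positive = quadratic_form_pos_if_diagonally_dominant[OF this]
  show ?thesis
  proof (intro exI conjI allI impI)
    show "((\<lambda>k. total_curv1 \<theta> k K2) has_real_derivative E1 + B) (at K1)"
      unfolding curv E1_def B_def by (rule log_fst)
    show "((\<lambda>k. total_curv1 \<theta> K1 k) has_real_derivative - B) (at K2)"
      unfolding curv B_def by (rule log_snd)
    show "((\<lambda>k. total_curv2 \<theta> k K2) has_real_derivative - B) (at K1)"
      unfolding curv B_def bigon_coupling_commute[of s c "exp K1"] by (rule log_snd)
    show "((\<lambda>k. total_curv2 \<theta> K1 k) has_real_derivative E2 + B) (at K2)"
      unfolding curv E2_def B_def bigon_coupling_commute[of s c "exp K1"] by (rule log_fst)
  qed (use positive in auto)
qed

end
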